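(* Let $t\ge 2$ be an integer and let $G_t$ be the graph defined below. Then every binomial in $\mathcal{G}=\mathcal{G}_1\cup\mathcal{G}_2\cup\mathcal{G}_3$ is primitive, $I_{G_t}$ is generated by $\mathcal{G}$, and $\mathcal{G}$ is a universal Gröbner basis of $I_{G_t}$, where $\mathcal{G}_1=\{a_ib_j-a_jb_i : 1\le i<j\le t\}$, $\mathcal{G}_2=\{a_ia_jf_1f_3e_2-f_2e_1e_3b_ib_j : 1\le i<j\le t\}$, $\mathcal{G}_3=\{a_i^2f_1f_3e_2-f_2e_1e_3b_i^2 : 1\le i\le t\}$.
   Context: $\mathbb{K}$ is an algebraically closed field of characteristic zero. For $t\ge2$, $G_t$ is the graph with vertex set $\{x_1,x_2,y_1,\dots,y_t,z_1,z_2,w_1,w_2\}$ and edges $a_i=\{x_1,y_i\}$, $b_i=\{x_2,y_i\}$ ($1\le i\le t$), $e_1=\{x_1,z_1\}$, $e_2=\{z_1,z_2\}$, $e_3=\{z_2,x_1\}$, $f_1=\{x_2,w_1\}$, $f_2=\{w_1,w_2\}$, $f_3=\{w_2,x_2\}$ (i.e. $K_{2,t}$ with a triangle attached at each of the two vertices of degree $t$). Its toric ideal $I_{G_t}$ is the kernel of the $\mathbb{K}$-algebra map from $\mathbb{K}[E_t]=\mathbb{K}[a_1,\dots,a_t,f_1,f_2,f_3,e_1,e_2,e_3,b_1,\dots,b_t]$ to the polynomial ring on the vertices sending each edge variable to the product of its two endpoints. A binomial $u_1-u_2\in I_{G_t}$ is primitive if there is no binomial $g_1-g_2\in I_{G_t}$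 (other than itself) with $g_1\mid u_1$ and $g_2\mid u_2$. A universal Gröbner basis is a set that is a Gröbner basis with respect to every monomial order. *)

theory Defs
  imports "HOL-Library.Poly_Mapping" "HOL-Computational_Algebra.Polynomial"
begin

(* Edge variables of K[E_t]: A i = a_i, B i = b_i, E k = e_k, F k = f_k *)
datatype edge = A nat | B nat | E nat | F nat

(* Vertices: VX k = x_k, VY i = y_i, VZ k = z_k, VW k = w_k *)
datatype vertex = VX nat | VY nat | VZ nat | VW nat

type_synonym emono = "edge \<Rightarrow>\<^sub>0 nat"
type_synonym vmono = "vertex \<Rightarrow>\<^sub>0 nat"
type_synonym 'k epoly = "emono \<Rightarrow>\<^sub>0 'k"
type_synonym 'k vpoly = "vmono \<Rightarrow>\<^sub>0 'k"

definition Et :: "nat \<Rightarrow> edge set" where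
  "Et t = {A i | i. 1 \<le> i \<and> i \<le> t} \<union> {B i | i. 1 \<le> i \<and> i \<le> t}
          \<union> {E 1, E 2, E 3, F 1, F 2, F 3}"

(* endpoints of each edge (only meaningful on E_t) *)
fun endpts :: "edge \<Rightarrow> vertex \<times> vertex" where
  "endpts (A i) = (VX 1, VY i)"
| "endpts (B i) = (VX 2, VY i)"
| "endpts (E k) = (if k = 1 then (VX 1, VZ 1) else if k = 2 then (VZ 1, VZ 2) else (VZ 2, VX 1))"
| "endpts (F k) = (if k = 1 then (VX 2, VW 1) else if k = 2 then (VW 1, VW 2) else (VW 2, VX 2))"

(* image of an edge monomial: each edge variable goes to the product of its endpoints *)
definition vimg :: "emono \<Rightarrow> vmono" where
  "vimg m = (\<Sum>e\<in>Poly_Mapping.keys m. Poly_Mapping.single (fst (endpts e)) (Poly_Mapping.lookup m e)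
                        + Poly_Mapping.single (snd (endpts e)) (Poly_Mapping.lookup m e))"

definition toric_map :: "'k::comm_ring_1 epoly \<Rightarrow> 'k vpoly" where
  "toric_map p = (\<Sum>m\<in>Poly_Mapping.keys p. Poly_Mapping.single (vimg m) (Poly_Mapping.lookup p m))"

(* the polynomial ring K[E_t] inside the polynomials over all edge symbols *)
definition PR :: "nat \<Rightarrow> 'k::comm_ring_1 epoly set" where
  "PR t = {p. \<forall>m\<in>Poly_Mapping.keys p. Poly_Mapping.keys m \<subseteq> Et t}"

definition toric_ideal :: "nat \<Rightarrow> 'k::comm_ring_1 epoly set" where
  "toric_ideal t = {p \<in> PR t. toric_map p = 0}"

definition ideal_gen :: "'k::comm_ring_1 epoly set \<Rightarrow> 'k epoly set \<Rightarrow> 'k epoly set" where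
  "ideal_gen R S = {p. \<exists>Fs c. finite Fs \<and> Fs \<subseteq> S \<and> (\<forall>g\<in>Fs. c g \<in> R) \<and> p = (\<Sum>g\<in>Fs. c g * g)}"

definition mv :: "edge \<Rightarrow> emono" where
  "mv x = Poly_Mapping.single x 1"

definition binom :: "emono \<Rightarrow> emono \<Rightarrow> 'k::comm_ring_1 epoly" where
  "binom u1 u2 = Poly_Mapping.single u1 1 - Poly_Mapping.single u2 1"

definition mdvd :: "emono \<Rightarrow> emono \<Rightarrow> bool" where
  "mdvd g u \<longleftrightarrow> (\<forall>x. Poly_Mapping.lookup g x \<le> Poly_Mapping.lookup u x)"

definition primitive :: "nat \<Rightarrow> emono \<Rightarrow> emono \<Rightarrow> 'k::comm_ring_1 itself \<Rightarrow> bool" where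
  "primitive t u1 u2 _ \<longleftrightarrow>
     (binom u1 u2 :: 'k epoly) \<in> toric_ideal t \<and>
     \<not> (\<exists>g1 g2. g1 \<noteq> g2 \<and> (binom g1 g2 :: 'k epoly) \<in> toric_ideal t
            \<and> (binom g1 g2 :: 'k epoly) \<noteq> binom u1 u2 \<and> mdvd g1 u1 \<and> mdvd g2 u2)"

definition monomial_order :: "(emono \<Rightarrow> emono \<Rightarrow> bool) \<Rightarrow> bool" where
  "monomial_order le \<longleftrightarrow>
     (\<forall>x. le x x) \<and> (\<forall>x y. le x y \<and> le y x \<longrightarrow> x = y) \<and>
     (\<forall>x y z. le x y \<and> le y z \<longrightarrow> le x z) \<and> (\<forall>x y. le x y \<or> le y x) \<and>
     (\<forall>x y z. le x y \<longrightarrow> le (x + z) (y + z)) \<and>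
     wf {(x, y). le x y \<and> x \<noteq> y}"

definition lead_mono :: "(emono \<Rightarrow> emono \<Rightarrow> bool) \<Rightarrow> 'k::zero epoly \<Rightarrow> emono" where
  "lead_mono le p = (THE m. m \<in> Poly_Mapping.keys p \<and> (\<forall>m'\<in>Poly_Mapping.keys p. le m' m))"

definition groebner_basis :: "(emono \<Rightarrow> emono \<Rightarrow> bool) \<Rightarrow> 'k::comm_ring_1 epoly set \<Rightarrow> 'k epoly set \<Rightarrow> bool" where
  "groebner_basis le G I \<longleftrightarrow> G \<subseteq> I \<and>
     (\<forall>f\<in>I. f \<noteq> 0 \<longrightarrow> (\<exists>g\<in>G. g \<noteq> 0 \<and> mdvd (lead_mono le g) (lead_mono le f)))"

definition universal_groebner_basis :: "'k::comm_ring_1 epoly set \<Rightarrow> 'k epoly set \<Rightarrow> bool" where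
  "universal_groebner_basis G I \<longleftrightarrow> (\<forall>le. monomial_order le \<longrightarrow> groebner_basis le G I)"

(* the three families, as pairs (u1, u2) representing u1 - u2 *)
definition G1 :: "nat \<Rightarrow> (emono \<times> emono) set" where
  "G1 t = {(mv (A i) + mv (B j), mv (A j) + mv (B i)) | i j. 1 \<le> i \<and> i < j \<and> j \<le> t}"

definition G2 :: "nat \<Rightarrow> (emono \<times> emono) set" where
  "G2 t = {(mv (A i) + mv (A j) + mv (F 1) + mv (F 3) + mv (E 2),
            mv (F 2) + mv (E 1) + mv (E 3) + mv (B i) + mv (B j)) | i j. 1 \<le> i \<and> i < j \<and> j \<le> t}"

definition G3 :: "nat \<Rightarrow> (emono \<times> emono) set" where
  "G3 t = {(mv (A i) + mv (A i) + mv (F 1) + mv (F 3) + mv (E 2),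
            mv (F 2) + mv (E 1) + mv (E 3) + mv (B i) + mv (B i)) | i. 1 \<le> i \<and> i \<le> t}"

definition Gpairs :: "nat \<Rightarrow> (emono \<times> emono) set" where
  "Gpairs t = G1 t \<union> G2 t \<union> G3 t"

definition Gset :: "nat \<Rightarrow> 'k::comm_ring_1 epoly set" where
  "Gset t = (\<lambda>(u1, u2). binom u1 u2) ` Gpairs t"

end

theory Submission
  imports Defs
begin

text \<open>
  Everything rests on one combinatorial fact: if two distinct monomials \<open>u \<noteq> v\<close> in the edge
  variables of \<open>G\<^sub>t\<close> have the same image, then some \<open>h - k \<in> \<G>\<close> (up to sign) has \<open>h | u\<close>
  and \<open>k | v\<close>. Comparing the degrees of \<open>u\<close> and \<open>v\<close> at \<open>z\<^sub>1, z\<^sub>2, w\<^sub>1, w\<^sub>2, y\<^sub>i, x\<^sub>1, x\<^sub>2\<close> shows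
  that the exponent difference \<open>d = u - v\<close> satisfies \<open>d(e\<^sub>1) = d(e\<^sub>3) = d(f\<^sub>2) = -s\<close>,
  \<open>d(f\<^sub>1) = d(f\<^sub>3) = s\<close> with \<open>s = d(e\<^sub>2)\<close>, \<open>d(b\<^sub>i) = -d(a\<^sub>i)\<close> and \<open>\<Sum>\<^sub>i d(a\<^sub>i) = 2s\<close>.
  For \<open>s > 0\<close> this yields a divisor pair from \<open>\<G>\<^sub>3\<close> (if some \<open>d(a\<^sub>i) \<ge> 2\<close>) or \<open>\<G>\<^sub>2\<close>, for
  \<open>s = 0\<close> one from \<open>\<G>\<^sub>1\<close>; \<open>s < 0\<close> is symmetric.

  Generation then follows by induction on the degree of \<open>u\<close>, the Groebner property by
  comparing a leading monomial with the least monomial of its fibre, and primitivity because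
  no element of \<open>\<G>\<close> divides another one.
\<close>

abbreviation (input) lookup :: "('a \<Rightarrow>\<^sub>0 'b::zero) \<Rightarrow> 'a \<Rightarrow> 'b"
  where "lookup \<equiv> Poly_Mapping.lookup"
abbreviation (input) keys :: "('a \<Rightarrow>\<^sub>0 'b::zero) \<Rightarrow> 'a set"
  where "keys \<equiv> Poly_Mapping.keys"
abbreviation (input) single :: "'a \<Rightarrow> 'b \<Rightarrow> ('a \<Rightarrow>\<^sub>0 'b::zero)"
  where "single \<equiv> Poly_Mapping.single"

lemma lookup_mv: "lookup (mv a) x = (if a = x then 1 else 0)"
  by (simp add: mv_def Poly_Mapping.lookup_single when_def)

lemma keys_add_nat: "keys (a + b) = keys a \<union> keys (b :: 'a \<Rightarrow>\<^sub>0 nat)"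
  by (auto simp: in_keys_iff Poly_Mapping.lookup_add)

definition mdeg :: "emono \<Rightarrow> nat" where
  "mdeg m = (\<Sum>e\<in>keys m. lookup m e)"

lemma mdeg_add: "mdeg (a + b) = mdeg a + mdeg b"
  unfolding mdeg_def by (rule setsum_keys_plus_distrib[where f = "\<lambda>_ c. c"]) simp_all

lemma mdeg_eq_0_iff: "mdeg m = 0 \<longleftrightarrow> m = 0"
  by (auto simp: mdeg_def in_keys_iff intro: poly_mapping_eqI)

lemma mdeg_mv [simp]: "mdeg (mv e) = 1"
  by (simp add: mdeg_def mv_def)

lemma mdvd_add_diff: "mdvd g u \<Longrightarrow> u = g + (u - g)"
  unfolding mdvd_def by (intro poly_mapping_eqI) (simp add: Poly_Mapping.lookup_add Poly_Mapping.lookup_minus)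

lemma mdvd_trans: "mdvd a b \<Longrightarrow> mdvd b c \<Longrightarrow> mdvd a c"
  unfolding mdvd_def using le_trans by blast

lemma mdvd_antisym: "mdvd a b \<Longrightarrow> mdvd b a \<Longrightarrow> a = b"
  unfolding mdvd_def by (intro poly_mapping_eqI) (simp add: le_antisym)

lemma mdvd_mdeg_le: "mdvd g u \<Longrightarrow> mdeg g \<le> mdeg u"
  by (metis le_add1 mdeg_add mdvd_add_diff)

lemma mdvd_mdeg_eq: "mdvd g u \<Longrightarrow> mdeg g = mdeg u \<Longrightarrow> g = u"
  by (metis add.right_neutral add_left_cancel mdeg_add mdeg_eq_0_iff mdvd_add_diff)

section \<open>The toric map\<close>

lemma toric_map_add: "toric_map (p + q) = toric_map p + toric_map (q :: 'k::comm_ring_1 epoly)"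
  unfolding toric_map_def
  by (rule setsum_keys_plus_distrib[where f = "\<lambda>m. single (vimg m)"]) (simp_all add: single_add)

lemma toric_map_diff: "toric_map (p - q) = toric_map p - toric_map (q :: 'k::comm_ring_1 epoly)"
  by (metis diff_add_cancel eq_diff_eq toric_map_add)

lemma toric_map_single: "toric_map (single m c) = single (vimg m) (c :: 'k::comm_ring_1)"
  by (cases "c = 0") (simp_all add: toric_map_def)

lemma toric_map_sum:
  "finite X \<Longrightarrow> toric_map (\<Sum>x\<in>X. p x) = (\<Sum>x\<in>X. toric_map (p x :: 'k::comm_ring_1 epoly))"
  by (induction X rule: finite_induct) (simp_all add: toric_map_def[of 0] toric_map_add)

lemma lookup_toric_map:
  "lookup (toric_map p) w = (\<Sum>m\<in>keys p. if vimg m = w then lookup p m else 0)"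
  unfolding toric_map_def by (simp add: Poly_Mapping.lookup_sum Poly_Mapping.lookup_single when_def eq_commute)

lemma vimg_add: "vimg (a + b) = vimg a + vimg b"
  unfolding vimg_def
  by (rule setsum_keys_plus_distrib[where f = "\<lambda>e c. single (fst (endpts e)) c + single (snd (endpts e)) c"])
    (simp_all add: single_add ac_simps)

lemma vimg_mv: "vimg (mv e) = single (fst (endpts e)) 1 + single (snd (endpts e)) 1"
  by (simp add: vimg_def mv_def)

lemma poly_mapping_sum_single: "(\<Sum>m\<in>keys p. single m (lookup p m)) = p"
  by (intro poly_mapping_eqI) (simp add: Poly_Mapping.lookup_sum Poly_Mapping.lookup_single when_def in_keys_iff)

lemma toric_map_mult: "toric_map (p * q) = toric_map p * toric_map (q :: 'k::comm_ring_1 epoly)"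
proof -
  have "p * q = (\<Sum>a\<in>keys p. single a (lookup p a)) * (\<Sum>b\<in>keys q. single b (lookup q b))"
    by (simp only: poly_mapping_sum_single)
  also have "\<dots> = (\<Sum>a\<in>keys p. \<Sum>b\<in>keys q. single (a + b) (lookup p a * lookup q b))"
    by (simp add: sum_product mult_single)
  finally have "toric_map (p * q)
      = (\<Sum>a\<in>keys p. \<Sum>b\<in>keys q. single (vimg a + vimg b) (lookup p a * lookup q b))"
    by (simp add: toric_map_sum toric_map_single vimg_add)
  also have "\<dots> = toric_map p * toric_map q"
    by (simp add: toric_map_def sum_product mult_single)
  finally show ?thesis .
qed

definition incidence :: "edge \<Rightarrow> vertex \<Rightarrow> nat" where
  "incidence e w = (if fst (endpts e) = w then 1 else 0) + (if snd (endpts e) = w then 1 else 0)"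

lemma lookup_vimg:
  assumes "finite S" "keys m \<subseteq> S"
  shows "lookup (vimg m) w = (\<Sum>e\<in>S. lookup m e * incidence e w)"
proof -
  have "lookup (vimg m) w = (\<Sum>e\<in>keys m. lookup m e * incidence e w)"
    by (auto simp: vimg_def Poly_Mapping.lookup_sum Poly_Mapping.lookup_add Poly_Mapping.lookup_single when_def
        incidence_def algebra_simps intro!: sum.cong)
  also have "\<dots> = (\<Sum>e\<in>S. lookup m e * incidence e w)"
    by (rule sum.mono_neutral_left) (use assms in \<open>auto simp: in_keys_iff\<close>)
  finally show ?thesis .
qed

lemma vimg_eq_0_iff: "vimg m = 0 \<longleftrightarrow> m = 0"
proof
  assume vm: "vimg m = 0"
  have "lookup m e = 0" for e
  proof (cases "e \<in> keys m")
    case True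
    have "lookup m e \<le> lookup m e * incidence e (fst (endpts e))"
      by (simp add: incidence_def)
    also have "\<dots> \<le> (\<Sum>e'\<in>keys m. lookup m e' * incidence e' (fst (endpts e)))"
      using True by (intro member_le_sum) auto
    also have "\<dots> = 0"
      using vm lookup_vimg[of "keys m" m "fst (endpts e)"] by simp
    finally show ?thesis by simp
  qed (simp add: in_keys_iff)
  then show "m = 0" by (intro poly_mapping_eqI) simp
qed (simp add: vimg_def)

lemma PR_subset: "keys p \<subseteq> keys q \<Longrightarrow> q \<in> PR t \<Longrightarrow> p \<in> PR t"
  by (auto simp: PR_def)

lemma PR_0: "0 \<in> PR t"
  by (simp add: PR_def)

lemma PR_single: "keys m \<subseteq> Et t \<Longrightarrow> single m c \<in> PR t"
  by (simp add: PR_def)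

lemma PR_one: "(1 :: 'k::comm_ring_1 epoly) \<in> PR t"
  by (simp add: PR_def)

lemma PR_add: "p \<in> PR t \<Longrightarrow> q \<in> PR t \<Longrightarrow> p + q \<in> PR t"
  using keys_add[of p q] by (auto simp: PR_def)

lemma PR_uminus: "p \<in> PR t \<Longrightarrow> - (p :: 'k::comm_ring_1 epoly) \<in> PR t"
  by (simp add: PR_def)

lemma PR_mult:
  assumes "p \<in> PR t" "q \<in> PR t"
  shows "p * (q :: 'k::comm_ring_1 epoly) \<in> PR t"
  unfolding PR_def mem_Collect_eq
proof
  fix m
  assume "m \<in> keys (p * q)"
  then obtain a b where "m = a + b" "a \<in> keys p" "b \<in> keys q"
    using keys_mult[of p q] by blast
  then show "keys m \<subseteq> Et t"
    using assms keys_add[of a b] unfolding PR_def by blast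
qed

lemma PR_sum: "finite X \<Longrightarrow> (\<And>x. x \<in> X \<Longrightarrow> p x \<in> PR t) \<Longrightarrow> (\<Sum>x\<in>X. p x) \<in> PR t"
  by (induction X rule: finite_induct) (simp_all add: PR_0 PR_add)

lemma ideal_genI:
  "finite Fs \<Longrightarrow> Fs \<subseteq> S \<Longrightarrow> (\<And>g. g \<in> Fs \<Longrightarrow> c g \<in> R) \<Longrightarrow> p = (\<Sum>g\<in>Fs. c g * g) \<Longrightarrow> p \<in> ideal_gen R S"
  unfolding ideal_gen_def by blast

lemma ideal_gen_0: "0 \<in> ideal_gen R S"
  by (rule ideal_genI[of "{}"]) simp_all

lemma ideal_gen_add:
  assumes "p \<in> ideal_gen (PR t) S" "q \<in> ideal_gen (PR t) S"
  shows "p + q \<in> ideal_gen (PR t) (S :: 'k::comm_ring_1 epoly set)"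
proof -
  obtain F1 c1 where F1: "finite F1" "F1 \<subseteq> S" "\<And>g. g \<in> F1 \<Longrightarrow> c1 g \<in> PR t" "p = (\<Sum>g\<in>F1. c1 g * g)"
    using assms(1) unfolding ideal_gen_def by blast
  obtain F2 c2 where F2: "finite F2" "F2 \<subseteq> S" "\<And>g. g \<in> F2 \<Longrightarrow> c2 g \<in> PR t" "q = (\<Sum>g\<in>F2. c2 g * g)"
    using assms(2) unfolding ideal_gen_def by blast
  define c where "c g = (if g \<in> F1 then c1 g else 0) + (if g \<in> F2 then c2 g else 0)" for g
  have "p + q = (\<Sum>g\<in>F1 \<union> F2. c g * g)"
    using F1 F2 by (simp add: c_def distrib_right sum.distrib if_distrib[of "\<lambda>x. x * _"]
        sum.inter_restrict[symmetric] Int_absorb1 Int_absorb2 cong: if_cong)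
  then show ?thesis
    using F1 F2 by (intro ideal_genI[of "F1 \<union> F2" S c]) (auto simp: c_def intro: PR_add PR_0)
qed

lemma ideal_gen_mult:
  assumes "r \<in> PR t" "p \<in> ideal_gen (PR t) S"
  shows "r * p \<in> ideal_gen (PR t) (S :: 'k::comm_ring_1 epoly set)"
proof -
  obtain Fs c where Fs: "finite Fs" "Fs \<subseteq> S" "\<And>g. g \<in> Fs \<Longrightarrow> c g \<in> PR t" "p = (\<Sum>g\<in>Fs. c g * g)"
    using assms(2) unfolding ideal_gen_def by blast
  have "r * p = (\<Sum>g\<in>Fs. (r * c g) * g)"
    using Fs by (simp add: sum_distrib_left mult.assoc)
  with Fs assms(1) show ?thesis
    by (intro ideal_genI[of Fs S "\<lambda>g. r * c g"]) (auto intro: PR_mult)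
qed

lemma ideal_gen_uminus: "p \<in> ideal_gen (PR t) S \<Longrightarrow> - p \<in> ideal_gen (PR t) (S :: 'k::comm_ring_1 epoly set)"
  using ideal_gen_mult[OF PR_uminus[OF PR_one], of p t S] by simp

lemma ideal_gen_generator: "g \<in> S \<Longrightarrow> g \<in> ideal_gen (PR t) (S :: 'k::comm_ring_1 epoly set)"
  by (rule ideal_genI[of "{g}" S "\<lambda>_. 1"]) (simp_all add: PR_one)

section \<open>Fibres of the toric map\<close>

definition same_fibre :: "nat \<Rightarrow> emono \<Rightarrow> emono \<Rightarrow> bool" where
  "same_fibre t u v \<longleftrightarrow> keys u \<subseteq> Et t \<and> keys v \<subseteq> Et t \<and> vimg u = vimg v"

lemma same_fibre_sym: "same_fibre t u v \<Longrightarrow> same_fibre t v u"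
  by (auto simp: same_fibre_def)

lemma same_fibre_add: "same_fibre t h k \<Longrightarrow> keys r \<subseteq> Et t \<Longrightarrow> same_fibre t (h + r) (k + r)"
  by (simp add: same_fibre_def keys_add_nat vimg_add)

lemma same_fibre_cancel:
  "same_fibre t (h + r) (k + r') \<Longrightarrow> vimg h = vimg k \<Longrightarrow> same_fibre t r r'"
  by (simp add: same_fibre_def keys_add_nat vimg_add)

lemma keys_binom: "u \<noteq> v \<Longrightarrow> keys (binom u v :: 'k::comm_ring_1 epoly) = {u, v}"
  by (auto simp: binom_def in_keys_iff Poly_Mapping.lookup_minus Poly_Mapping.lookup_single when_def
      split: if_splits)

lemma binom_mem_toric_ideal_iff:
  assumes "u \<noteq> v"
  shows "(binom u v :: 'k::comm_ring_1 epoly) \<in> toric_ideal t \<longleftrightarrow> same_fibre t u v"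
proof -
  have "keys (binom u v :: 'k epoly) = {u, v}"
    using assms by (rule keys_binom)
  moreover have "toric_map (binom u v :: 'k epoly) = single (vimg u) 1 - single (vimg v) 1"
    by (simp add: binom_def toric_map_diff toric_map_single)
  moreover have "single (vimg u) 1 - single (vimg v) (1 :: 'k) = 0 \<longleftrightarrow> vimg u = vimg v"
    by (metis eq_iff_diff_eq_0 lookup_single_eq lookup_single_not_eq zero_neq_one)
  ultimately show ?thesis
    by (auto simp: toric_ideal_def PR_def same_fibre_def)
qed

lemma toric_ideal_fibre_partner:
  assumes "toric_map f = (0 :: 'k::comm_ring_1 vpoly)" "u \<in> keys f"
  obtains v where "v \<in> keys f" "v \<noteq> u" "vimg v = vimg u"
proof -
  have "\<exists>v\<in>keys f. v \<noteq> u \<and> vimg v = vimg u"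
  proof (rule ccontr)
    assume "\<not> ?thesis"
    then have "(\<Sum>m\<in>keys f. if vimg m = vimg u then lookup f m else 0)
        = (\<Sum>m\<in>keys f. if m = u then lookup f m else 0)"
      by (intro sum.cong) auto
    then have "lookup (toric_map f) (vimg u) = lookup f u"
      using assms(2) by (simp add: lookup_toric_map)
    then show False
      using assms by (simp add: in_keys_iff)
  qed
  then show ?thesis using that by blast
qed

lemma toric_ideal_subset_ideal_gen:
  assumes fibre: "\<And>u v. same_fibre t u v \<Longrightarrow> binom u v \<in> ideal_gen (PR t) S"
  shows "toric_ideal t \<subseteq> ideal_gen (PR t) (S :: 'k::comm_ring_1 epoly set)"
proof
  fix f :: "'k epoly"
  assume "f \<in> toric_ideal t"
  then show "f \<in> ideal_gen (PR t) S"
  proof (induction "card (keys f)" arbitrary: f rule: less_induct)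
    case less
    show ?case
    proof (cases "f = 0")
      case True
      then show ?thesis by (simp add: ideal_gen_0)
    next
      case False
      then obtain u where u: "u \<in> keys f" by fastforce
      have fPR: "f \<in> PR t" and fT: "toric_map f = 0"
        using less.prems by (auto simp: toric_ideal_def)
      obtain v where v: "v \<in> keys f" "v \<noteq> u" "vimg v = vimg u"
        using toric_ideal_fibre_partner[OF fT u] by blast
      define c where "c = lookup f u"
      define f' where "f' = f - (single u c - single v c)"
      have keys_f': "keys f' \<subseteq> keys f - {u}"
        using v by (auto simp: f'_def c_def in_keys_iff Poly_Mapping.lookup_minus Poly_Mapping.lookup_single when_def
            split: if_splits)
      then have "card (keys f') < card (keys f)"
        using u by (intro psubset_card_mono) auto
      moreover have "f' \<in> toric_ideal t"
        using keys_f' fPR fT v(3)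
        by (auto simp: toric_ideal_def f'_def toric_map_diff toric_map_single intro: PR_subset)
      ultimately have f': "f' \<in> ideal_gen (PR t) S"
        by (rule less.hyps)
      have "same_fibre t u v"
        using fPR u v by (auto simp: PR_def same_fibre_def)
      then have "single 0 c * binom u v \<in> ideal_gen (PR t) S"
        by (intro ideal_gen_mult PR_single fibre) auto
      moreover have "f = f' + single 0 c * binom u v"
        by (simp add: f'_def binom_def right_diff_distrib mult_single)
      ultimately show ?thesis
        using ideal_gen_add[OF f'] by simp
    qed
  qed
qed

lemma ideal_gen_subset_toric_ideal:
  assumes "S \<subseteq> toric_ideal t"
  shows "ideal_gen (PR t) S \<subseteq> (toric_ideal t :: 'k::comm_ring_1 epoly set)"
proof
  fix p :: "'k epoly"
  assume "p \<in> ideal_gen (PR t) S"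
  then obtain Fs c where Fs: "finite Fs" "Fs \<subseteq> S" "\<forall>g\<in>Fs. c g \<in> PR t" "p = (\<Sum>g\<in>Fs. c g * g)"
    unfolding ideal_gen_def by blast
  have "g \<in> PR t" "toric_map g = 0" if "g \<in> Fs" for g
    using that Fs(2) assms by (auto simp: toric_ideal_def)
  then show "p \<in> toric_ideal t"
    using Fs by (auto simp: toric_ideal_def toric_map_sum toric_map_mult intro!: PR_sum PR_mult)
qed

section \<open>Sets of moves dividing every pair of a fibre\<close>

definition moves :: "nat \<Rightarrow> (emono \<times> emono) set" where
  "moves t = {(h, k). same_fibre t h k \<and> h \<noteq> k}"

definition binoms :: "(emono \<times> emono) set \<Rightarrow> 'k::comm_ring_1 epoly set" where
  "binoms P = (\<lambda>(u, v). binom u v) ` P"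

definition divides_fibre_pairs :: "nat \<Rightarrow> (emono \<times> emono) set \<Rightarrow> bool" where
  "divides_fibre_pairs t P \<longleftrightarrow>
     (\<forall>u v. same_fibre t u v \<and> u \<noteq> v \<longrightarrow> (\<exists>(h, k) \<in> P \<union> P\<inverse>. mdvd h u \<and> mdvd k v))"

lemma moves_sym: "P \<subseteq> moves t \<Longrightarrow> P \<union> P\<inverse> \<subseteq> moves t"
  by (auto simp: moves_def same_fibre_def)

lemma moves_nonzero: "(h, k) \<in> moves t \<Longrightarrow> h \<noteq> 0"
  by (auto simp: moves_def same_fibre_def) (metis vimg_eq_0_iff)

lemma binoms_subset_toric_ideal: "P \<subseteq> moves t \<Longrightarrow> binoms P \<subseteq> (toric_ideal t :: 'k::comm_ring_1 epoly set)"
  by (auto simp: binoms_def moves_def binom_mem_toric_ideal_iff)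

lemma binom_mem_ideal_gen_binoms:
  assumes "(h, k) \<in> P \<union> P\<inverse>"
  shows "(binom h k :: 'k::comm_ring_1 epoly) \<in> ideal_gen (PR t) (binoms P)"
proof -
  have "binom h k \<in> binoms P \<or> - binom h k \<in> (binoms P :: 'k epoly set)"
    using assms by (force simp: binoms_def binom_def)
  then show ?thesis
    by (metis ideal_gen_generator ideal_gen_uminus minus_minus)
qed

lemma fibre_binom_mem_ideal_gen:
  assumes P: "P \<subseteq> moves t" "divides_fibre_pairs t P" and "same_fibre t u v"
  shows "(binom u v :: 'k::comm_ring_1 epoly) \<in> ideal_gen (PR t) (binoms P)"
  using assms(3)
proof (induction "mdeg u" arbitrary: u v rule: less_induct)
  case less
  show ?case
  proof (cases "u = v")
    case True
    then show ?thesis by (simp add: binom_def ideal_gen_0)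
  next
    case False
    then obtain h k where hk: "(h, k) \<in> P \<union> P\<inverse>" "mdvd h u" "mdvd k v"
      using P(2) less.prems unfolding divides_fibre_pairs_def by blast
    then have move: "(h, k) \<in> moves t"
      using moves_sym[OF P(1)] by blast
    define r r' where "r = u - h" and "r' = v - k"
    have u: "u = h + r" and v: "v = k + r'"
      unfolding r_def r'_def using hk by (simp_all add: mdvd_add_diff)
    have r: "same_fibre t r r'"
      using less.prems move
      by (intro same_fibre_cancel[of t h r k r']) (simp_all add: u[symmetric] v[symmetric] moves_def same_fibre_def)
    have "mdeg r < mdeg u"
      using moves_nonzero[OF move] mdeg_eq_0_iff[of h] by (simp add: u mdeg_add)
    then have "binom r r' \<in> ideal_gen (PR t) (binoms P :: 'k epoly set)"
      using less.hyps r by blast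
    then have "single k 1 * binom r r' \<in> ideal_gen (PR t) (binoms P :: 'k epoly set)"
      using move by (intro ideal_gen_mult PR_single) (simp add: moves_def same_fibre_def)
    moreover have "single r 1 * binom h k \<in> ideal_gen (PR t) (binoms P :: 'k epoly set)"
      using r hk(1) by (intro ideal_gen_mult PR_single binom_mem_ideal_gen_binoms) (simp_all add: same_fibre_def)
    moreover have "(binom u v :: 'k epoly) = single r 1 * binom h k + single k 1 * binom r r'"
      unfolding binom_def u v by (simp add: right_diff_distrib mult_single add.commute)
    ultimately show ?thesis
      by (metis ideal_gen_add)
  qed
qed

lemma toric_ideal_eq_ideal_gen_binoms:
  assumes "P \<subseteq> moves t" "divides_fibre_pairs t P"
  shows "toric_ideal t = ideal_gen (PR t) (binoms P :: 'k::comm_ring_1 epoly set)"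
  using assms
  by (intro equalityI toric_ideal_subset_ideal_gen fibre_binom_mem_ideal_gen
      ideal_gen_subset_toric_ideal binoms_subset_toric_ideal)

lemma primitive_if_minimal:
  assumes P: "P \<subseteq> moves t" "divides_fibre_pairs t P" and u: "(u1, u2) \<in> P"
    and minimal: "\<And>h k. (h, k) \<in> P \<union> P\<inverse> \<Longrightarrow> mdvd h u1 \<Longrightarrow> mdvd k u2 \<Longrightarrow> h = u1 \<and> k = u2"
  shows "primitive t u1 u2 TYPE('k::comm_ring_1)"
  unfolding primitive_def
proof (intro conjI notI)
  show "(binom u1 u2 :: 'k epoly) \<in> toric_ideal t"
    using u P(1) by (auto simp: moves_def binom_mem_toric_ideal_iff)
next
  assume "\<exists>g1 g2. g1 \<noteq> g2 \<and> (binom g1 g2 :: 'k epoly) \<in> toric_ideal t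
            \<and> (binom g1 g2 :: 'k epoly) \<noteq> binom u1 u2 \<and> mdvd g1 u1 \<and> mdvd g2 u2"
  then obtain g1 g2 where g: "g1 \<noteq> g2" "(binom g1 g2 :: 'k epoly) \<in> toric_ideal t"
      "(binom g1 g2 :: 'k epoly) \<noteq> binom u1 u2" "mdvd g1 u1" "mdvd g2 u2"
    by blast
  then have "same_fibre t g1 g2"
    by (simp add: binom_mem_toric_ideal_iff)
  then obtain h k where hk: "(h, k) \<in> P \<union> P\<inverse>" "mdvd h g1" "mdvd k g2"
    using P(2) g(1) unfolding divides_fibre_pairs_def by blast
  then have "h = u1" "k = u2"
    using minimal g(4,5) mdvd_trans by blast+
  then show False
    using g(3-5) hk(2,3) mdvd_antisym by blast
qed

section \<open>Universal Groebner bases\<close>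

lemma monomial_orderD:
  assumes "monomial_order le"
  shows "le x x" "le x y \<Longrightarrow> le y x \<Longrightarrow> x = y" "le x y \<Longrightarrow> le y z \<Longrightarrow> le x z"
    "le x y \<or> le y x" "le x y \<Longrightarrow> le (x + z) (y + z)" "wf {(x, y). le x y \<and> x \<noteq> y}"
  using assms unfolding monomial_order_def by blast+

lemma finite_has_greatest_wrt:
  assumes "finite K" "K \<noteq> {}" "monomial_order le"
  shows "\<exists>m\<in>K. \<forall>m'\<in>K. le m' m"
  using assms(1,2)
proof (induction K rule: finite_ne_induct)
  case (singleton x)
  then show ?case using monomial_orderD(1)[OF assms(3)] by simp
next
  case (insert x K)
  then obtain m where m: "m \<in> K" "\<forall>m'\<in>K. le m' m" by blast
  show ?case
  proof (cases "le x m")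
    case True
    then show ?thesis using m by blast
  next
    case False
    then have "le m x" using monomial_orderD(4)[OF assms(3)] by blast
    then show ?thesis using m monomial_orderD(1,3)[OF assms(3)] by blast
  qed
qed

lemma lead_mono_eqI:
  assumes "monomial_order le" "m \<in> keys p" "\<forall>m'\<in>keys p. le m' m"
  shows "lead_mono le p = m"
  unfolding lead_mono_def
proof (rule the_equality)
  show "m \<in> keys p \<and> (\<forall>m'\<in>keys p. le m' m)"
    using assms(2,3) by blast
next
  fix m'' assume "m'' \<in> keys p \<and> (\<forall>m'\<in>keys p. le m' m'')"
  then show "m'' = m"
    using assms(2,3) monomial_orderD(2)[OF assms(1)] by blast
qed

lemma lead_mono_greatest:
  assumes "monomial_order le" "p \<noteq> 0"
  shows "lead_mono le p \<in> keys p" "\<forall>m\<in>keys p. le m (lead_mono le p)"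
proof -
  obtain m where m: "m \<in> keys p" "\<forall>m'\<in>keys p. le m' m"
    using finite_has_greatest_wrt[OF finite_keys _ assms(1)] assms(2) by auto
  moreover from m have "lead_mono le p = m"
    by (rule lead_mono_eqI[OF assms(1)])
  ultimately show "lead_mono le p \<in> keys p" "\<forall>m\<in>keys p. le m (lead_mono le p)"
    by simp_all
qed

text \<open>
  If the lower monomial \<open>k\<close> of a move \<open>h - k\<close> divided the least monomial \<open>m = k + r\<close> of its
  fibre, then \<open>h + r\<close> would be an even smaller monomial of the same fibre.
\<close>

lemma move_lead_at_fibre_least:
  assumes mo: "monomial_order le" and move: "(h, k) \<in> moves t" and "mdvd k m" "keys m \<subseteq> Et t"
    and least: "\<And>m'. same_fibre t m' m \<Longrightarrow> le m m'"
  shows "le k h"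
proof (rule ccontr)
  assume "\<not> le k h"
  then have "le h k"
    using monomial_orderD(4)[OF mo] by blast
  define r where "r = m - k"
  have m: "m = k + r"
    unfolding r_def using \<open>mdvd k m\<close> by (rule mdvd_add_diff)
  have "keys r \<subseteq> Et t"
    using \<open>keys m \<subseteq> Et t\<close> by (simp add: m keys_add_nat)
  then have "same_fibre t (h + r) m"
    using move m by (simp add: moves_def same_fibre_add)
  then have "le m (h + r)"
    by (rule least)
  moreover have "le (h + r) m"
    unfolding m using \<open>le h k\<close> by (rule monomial_orderD(5)[OF mo])
  ultimately have "h + r = m"
    using monomial_orderD(2)[OF mo] by blast
  then show False
    using move m by (simp add: moves_def)
qed

lemma fibre_has_least:
  assumes "monomial_order le" "same_fibre t v u"
  obtains m where "same_fibre t m u" "\<And>m'. same_fibre t m' m \<Longrightarrow> le m m'"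
proof -
  obtain m where m: "m \<in> {m. same_fibre t m u}"
    and m_min: "\<And>y. (y, m) \<in> {(x, y). le x y \<and> x \<noteq> y} \<Longrightarrow> y \<notin> {m. same_fibre t m u}"
    using wfE_min[OF monomial_orderD(6)[OF assms(1)], of v "{m. same_fibre t m u}"] assms(2) by blast
  have "le m m'" if "same_fibre t m' m" for m'
  proof (cases "le m' m")
    case True
    have "same_fibre t m' u"
      using that m by (auto simp: same_fibre_def)
    then show ?thesis
      using m_min[of m'] True monomial_orderD(1)[OF assms(1)] by auto
  next
    case False
    then show ?thesis
      using monomial_orderD(4)[OF assms(1)] by blast
  qed
  then show ?thesis
    using that m by blast
qed

lemma binoms_lead_mono:
  assumes "monomial_order le" "(h, k) \<in> P \<union> P\<inverse>" "h \<noteq> k" "le k h"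
  obtains g where "g \<in> (binoms P :: 'k::comm_ring_1 epoly set)" "g \<noteq> 0" "lead_mono le g = h"
proof -
  have keys: "keys (binom h k :: 'k epoly) = {h, k}" "keys (binom k h :: 'k epoly) = {h, k}"
    using assms(3) keys_binom[of h k] keys_binom[of k h] by auto
  have "binom h k \<in> binoms P \<or> binom k h \<in> (binoms P :: 'k epoly set)"
    using assms(2) unfolding binoms_def by (auto intro: rev_image_eqI)
  then obtain g :: "'k epoly" where g: "g \<in> binoms P" "keys g = {h, k}"
    using keys by blast
  moreover have "lead_mono le g = h"
    using g(2) assms(4) monomial_orderD(1)[OF assms(1)] by (intro lead_mono_eqI[OF assms(1)]) simp_all
  moreover have "g \<noteq> 0"
    using g(2) by (metis insert_not_empty keys_eq_empty)
  ultimately show ?thesis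
    using that by blast
qed

lemma groebner_basis_binoms:
  assumes mo: "monomial_order le" and P: "P \<subseteq> moves t" "divides_fibre_pairs t P"
  shows "groebner_basis le (binoms P) (toric_ideal t :: 'k::comm_ring_1 epoly set)"
  unfolding groebner_basis_def
proof (intro conjI ballI impI)
  show "binoms P \<subseteq> (toric_ideal t :: 'k epoly set)"
    using P(1) by (rule binoms_subset_toric_ideal)
next
  fix f :: "'k epoly"
  assume f: "f \<in> toric_ideal t" "f \<noteq> 0"
  define u where "u = lead_mono le f"
  have u: "u \<in> keys f" "\<forall>m\<in>keys f. le m u"
    using lead_mono_greatest[OF mo f(2)] unfolding u_def by blast+
  obtain v where v: "v \<in> keys f" "v \<noteq> u" "vimg v = vimg u"
    using toric_ideal_fibre_partner u(1) f(1) by (auto simp: toric_ideal_def)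
  have vu: "same_fibre t v u"
    using f(1) u(1) v by (auto simp: toric_ideal_def PR_def same_fibre_def)
  then obtain m where m: "same_fibre t m u" and least: "\<And>m'. same_fibre t m' m \<Longrightarrow> le m m'"
    using fibre_has_least[OF mo] by blast
  have "m \<noteq> u"
  proof
    assume "m = u"
    then have "le u v"
      using least vu by simp
    then show False
      using u(2) v(1,2) monomial_orderD(2)[OF mo] by blast
  qed
  then obtain h k where hk: "(h, k) \<in> P \<union> P\<inverse>" "mdvd h u" "mdvd k m"
    using P(2) same_fibre_sym m unfolding divides_fibre_pairs_def by blast
  then have move: "(h, k) \<in> moves t"
    using moves_sym[OF P(1)] by blast
  then have "le k h"
    using move_lead_at_fibre_least[OF mo move hk(3)] m least by (simp add: same_fibre_def)
  then obtain g where "g \<in> (binoms P :: 'k epoly set)" "g \<noteq> 0" "lead_mono le g = h"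
    using binoms_lead_mono[OF mo hk(1)] move by (auto simp: moves_def)
  then show "\<exists>g\<in>(binoms P :: 'k epoly set). g \<noteq> 0 \<and> mdvd (lead_mono le g) (lead_mono le f)"
    using hk(2) unfolding u_def by blast
qed

section \<open>The graph \<open>G\<^sub>t\<close>\<close>

lemma Et_eq: "Et t = A ` {1..t} \<union> B ` {1..t} \<union> {E 1, E 2, E 3, F 1, F 2, F 3}"
  unfolding Et_def by auto

lemma lookup_vimg_Et:
  assumes "keys m \<subseteq> Et t"
  shows "lookup (vimg m) w = (\<Sum>i=1..t. lookup m (A i) * incidence (A i) w)
      + (\<Sum>i=1..t. lookup m (B i) * incidence (B i) w)
      + lookup m (E 1) * incidence (E 1) w + lookup m (E 2) * incidence (E 2) w
      + lookup m (E 3) * incidence (E 3) w + lookup m (F 1) * incidence (F 1) w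
      + lookup m (F 2) * incidence (F 2) w + lookup m (F 3) * incidence (F 3) w"
proof -
  have "lookup (vimg m) w = (\<Sum>e\<in>Et t. lookup m e * incidence e w)"
    using assms by (intro lookup_vimg) (simp_all add: Et_eq)
  also have "\<dots> = (\<Sum>e\<in>A ` {1..t}. lookup m e * incidence e w) + (\<Sum>e\<in>B ` {1..t}. lookup m e * incidence e w)
      + (\<Sum>e\<in>{E 1, E 2, E 3, F 1, F 2, F 3}. lookup m e * incidence e w)"
    unfolding Et_eq by (subst sum.union_disjoint; (subst sum.union_disjoint)?; auto)
  finally show ?thesis
    by (simp add: sum.reindex inj_on_def)
qed

lemma lookup_vimg_vertices:
  assumes "keys m \<subseteq> Et t"
  shows "lookup (vimg m) (VZ 1) = lookup m (E 1) + lookup m (E 2)"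
    and "lookup (vimg m) (VZ 2) = lookup m (E 2) + lookup m (E 3)"
    and "lookup (vimg m) (VW 1) = lookup m (F 1) + lookup m (F 2)"
    and "lookup (vimg m) (VW 2) = lookup m (F 2) + lookup m (F 3)"
    and "lookup (vimg m) (VX 1) = (\<Sum>i=1..t. lookup m (A i)) + lookup m (E 1) + lookup m (E 3)"
    and "lookup (vimg m) (VX 2) = (\<Sum>i=1..t. lookup m (B i)) + lookup m (F 1) + lookup m (F 3)"
    and "j \<in> {1..t} \<Longrightarrow> lookup (vimg m) (VY j) = lookup m (A j) + lookup m (B j)"
  using assms by (simp_all add: lookup_vimg_Et incidence_def if_distrib[of "(*) _"] cong: if_cong)

lemma same_fibre_vertex_degrees:
  assumes "same_fibre t u v"
  shows "lookup u (E 1) + lookup u (E 2) = lookup v (E 1) + lookup v (E 2)"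
    and "lookup u (E 2) + lookup u (E 3) = lookup v (E 2) + lookup v (E 3)"
    and "lookup u (F 1) + lookup u (F 2) = lookup v (F 1) + lookup v (F 2)"
    and "lookup u (F 2) + lookup u (F 3) = lookup v (F 2) + lookup v (F 3)"
    and "(\<Sum>i=1..t. lookup u (A i)) + lookup u (E 1) + lookup u (E 3)
      = (\<Sum>i=1..t. lookup v (A i)) + lookup v (E 1) + lookup v (E 3)"
    and "(\<Sum>i=1..t. lookup u (B i)) + lookup u (F 1) + lookup u (F 3)
      = (\<Sum>i=1..t. lookup v (B i)) + lookup v (F 1) + lookup v (F 3)"
    and "j \<in> {1..t} \<Longrightarrow> lookup u (A j) + lookup u (B j) = lookup v (A j) + lookup v (B j)"
  using assms lookup_vimg_vertices[of u t] lookup_vimg_vertices[of v t] unfolding same_fibre_def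
  by metis+

definition exp_diff :: "emono \<Rightarrow> emono \<Rightarrow> edge \<Rightarrow> int" where
  "exp_diff u v e = int (lookup u e) - int (lookup v e)"

lemma same_fibre_exp_diff:
  assumes "same_fibre t u v"
  defines "d \<equiv> exp_diff u v"
  shows "d (E 1) = - d (E 2)" "d (E 3) = - d (E 2)" "d (F 1) = d (E 2)" "d (F 3) = d (E 2)"
    "d (F 2) = - d (E 2)" "j \<in> {1..t} \<Longrightarrow> d (B j) = - d (A j)" "(\<Sum>i=1..t. d (A i)) = 2 * d (E 2)"
proof -
  note deg = same_fibre_vertex_degrees[OF assms(1)]
  show E1: "d (E 1) = - d (E 2)" and E3: "d (E 3) = - d (E 2)"
    using deg(1,2) unfolding d_def exp_diff_def by linarith+
  have F13: "d (F 1) = - d (F 2)" "d (F 3) = - d (F 2)"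
    using deg(3,4) unfolding d_def exp_diff_def by linarith+
  show BA: "d (B j) = - d (A j)" if "j \<in> {1..t}" for j
    using deg(7)[OF that] unfolding d_def exp_diff_def by linarith
  have "(\<Sum>i=1..t. d (A i)) = - d (E 1) - d (E 3)" "(\<Sum>i=1..t. d (B i)) = - d (F 1) - d (F 3)"
    using arg_cong[OF deg(5), of int] arg_cong[OF deg(6), of int]
    unfolding d_def exp_diff_def sum_subtractf by simp_all
  moreover have "(\<Sum>i=1..t. d (B i)) = - (\<Sum>i=1..t. d (A i))"
    using BA by (simp add: sum_negf[symmetric])
  ultimately show "(\<Sum>i=1..t. d (A i)) = 2 * d (E 2)" "d (F 2) = - d (E 2)"
    using E1 E3 F13 by simp_all
  then show "d (F 1) = d (E 2)" "d (F 3) = d (E 2)"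
    using F13 by simp_all
qed

lemma sum_pos_imp_ex_pos: "0 < sum f S \<Longrightarrow> \<exists>x\<in>S. 0 < (f x :: 'a::linordered_ab_group_add)"
  by (metis not_less sum_nonpos)

lemma sum_neg_imp_ex_neg: "sum f S < 0 \<Longrightarrow> \<exists>x\<in>S. f x < (0 :: 'a::linordered_ab_group_add)"
  by (metis not_less sum_nonneg)

definition G1_mono :: "nat \<Rightarrow> nat \<Rightarrow> emono" where
  "G1_mono i j = mv (A i) + mv (B j)"

definition G23_lhs :: "nat \<Rightarrow> nat \<Rightarrow> emono" where
  "G23_lhs i j = mv (A i) + mv (A j) + mv (F 1) + mv (F 3) + mv (E 2)"

definition G23_rhs :: "nat \<Rightarrow> nat \<Rightarrow> emono" where
  "G23_rhs i j = mv (F 2) + mv (E 1) + mv (E 3) + mv (B i) + mv (B j)"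

lemma Gpairs_cases:
  assumes "(h, k) \<in> Gpairs t"
  shows "(\<exists>i j. 1 \<le> i \<and> i < j \<and> j \<le> t \<and> h = G1_mono i j \<and> k = G1_mono j i)
       \<or> (\<exists>i j. 1 \<le> i \<and> i \<le> j \<and> j \<le> t \<and> h = G23_lhs i j \<and> k = G23_rhs i j)"
proof -
  consider "(h, k) \<in> G1 t" | "(h, k) \<in> G2 t" | "(h, k) \<in> G3 t"
    using assms unfolding Gpairs_def by blast
  then show ?thesis
  proof cases
    case 1
    then show ?thesis
      unfolding G1_def G1_mono_def by blast
  next
    case 2
    then show ?thesis
      unfolding G2_def G23_lhs_def G23_rhs_def by (blast intro: less_imp_le_nat)
  next
    case 3
    then show ?thesis
      unfolding G3_def G23_lhs_def G23_rhs_def by blast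
  qed
qed

lemma G1_pair_mem:
  assumes "i \<in> {1..t}" "j \<in> {1..t}" "i \<noteq> j"
  shows "(G1_mono i j, G1_mono j i) \<in> Gpairs t \<union> (Gpairs t)\<inverse>"
proof (cases "i < j")
  case True
  then show ?thesis
    using assms unfolding Gpairs_def G1_def G1_mono_def by auto
next
  case False
  then have "(G1_mono j i, G1_mono i j) \<in> G1 t"
    using assms unfolding G1_def G1_mono_def by force
  then show ?thesis
    unfolding Gpairs_def by blast
qed

lemma G23_pair_mem:
  assumes "i \<in> {1..t}" "j \<in> {1..t}"
  shows "(G23_lhs i j, G23_rhs i j) \<in> Gpairs t"
proof -
  have lhs: "G23_lhs i j = G23_lhs j i" and rhs: "G23_rhs i j = G23_rhs j i"
    by (simp_all add: G23_lhs_def G23_rhs_def ac_simps)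
  consider "i = j" | "i < j" | "j < i"
    by fastforce
  then show ?thesis
  proof cases
    case 1
    then show ?thesis
      using assms unfolding Gpairs_def G3_def G23_lhs_def G23_rhs_def by auto
  next
    case 2
    then show ?thesis
      using assms unfolding Gpairs_def G2_def G23_lhs_def G23_rhs_def by auto
  next
    case 3
    then have "(G23_lhs j i, G23_rhs j i) \<in> Gpairs t"
      using assms unfolding Gpairs_def G2_def G23_lhs_def G23_rhs_def by auto
    then show ?thesis
      by (simp only: lhs rhs)
  qed
qed

lemma Gpairs_subset_moves: "Gpairs t \<subseteq> moves t"
proof
  fix p
  assume "p \<in> Gpairs t"
  then obtain h k where p: "p = (h, k)" and hk: "(h, k) \<in> Gpairs t"
    by (cases p) auto
  have keys_mv: "keys (mv e) = {e}" for e
    by (simp add: mv_def)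
  from Gpairs_cases[OF hk] have "same_fibre t h k \<and> h \<noteq> k"
  proof (elim disjE exE conjE)
    fix i j
    assume ij: "1 \<le> i" "i < j" "j \<le> t" and h: "h = G1_mono i j" and k: "k = G1_mono j i"
    have "lookup h (A i) \<noteq> lookup k (A i)"
      using ij by (simp add: h k G1_mono_def Poly_Mapping.lookup_add lookup_mv)
    then show ?thesis
      using ij by (auto simp: h k G1_mono_def same_fibre_def keys_add_nat keys_mv vimg_add vimg_mv Et_def ac_simps)
  next
    fix i j
    assume ij: "1 \<le> i" "i \<le> j" "j \<le> t" and h: "h = G23_lhs i j" and k: "k = G23_rhs i j"
    have "lookup h (E 2) \<noteq> lookup k (E 2)"
      by (simp add: h k G23_lhs_def G23_rhs_def Poly_Mapping.lookup_add lookup_mv)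
    then show ?thesis
      using ij by (auto simp: h k G23_lhs_def G23_rhs_def same_fibre_def keys_add_nat keys_mv
          vimg_add vimg_mv Et_def ac_simps)
  qed
  then show "p \<in> moves t"
    by (simp add: p moves_def)
qed

lemma mdvd_G1_mono: "1 \<le> lookup u (A i) \<Longrightarrow> 1 \<le> lookup u (B j) \<Longrightarrow> mdvd (G1_mono i j) u"
  unfolding mdvd_def G1_mono_def by (auto simp: Poly_Mapping.lookup_add lookup_mv)

lemma mdvd_G23_lhs:
  "1 \<le> lookup u (A i) \<Longrightarrow> 1 \<le> lookup u (A j) \<Longrightarrow> (i = j \<Longrightarrow> 2 \<le> lookup u (A i))
   \<Longrightarrow> 1 \<le> lookup u (F 1) \<Longrightarrow> 1 \<le> lookup u (F 3) \<Longrightarrow> 1 \<le> lookup u (E 2) \<Longrightarrow> mdvd (G23_lhs i j) u"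
  unfolding mdvd_def G23_lhs_def by (auto simp: Poly_Mapping.lookup_add lookup_mv)

lemma mdvd_G23_rhs:
  "1 \<le> lookup v (B i) \<Longrightarrow> 1 \<le> lookup v (B j) \<Longrightarrow> (i = j \<Longrightarrow> 2 \<le> lookup v (B i))
   \<Longrightarrow> 1 \<le> lookup v (F 2) \<Longrightarrow> 1 \<le> lookup v (E 1) \<Longrightarrow> 1 \<le> lookup v (E 3) \<Longrightarrow> mdvd (G23_rhs i j) v"
  unfolding mdvd_def G23_rhs_def by (auto simp: Poly_Mapping.lookup_add lookup_mv)

lemma G23_divides_if_E2_surplus:
  assumes "same_fibre t u v" "0 < exp_diff u v (E 2)"
  shows "\<exists>i\<in>{1..t}. \<exists>j\<in>{1..t}. mdvd (G23_lhs i j) u \<and> mdvd (G23_rhs i j) v"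
proof -
  define d where "d = exp_diff u v"
  note eqs = same_fibre_exp_diff[OF assms(1), folded d_def]
  have s: "0 < d (E 2)"
    using assms(2) by (simp add: d_def)
  have edges: "1 \<le> lookup u (E 2)" "1 \<le> lookup v (E 1)" "1 \<le> lookup v (E 3)"
      "1 \<le> lookup u (F 1)" "1 \<le> lookup u (F 3)" "1 \<le> lookup v (F 2)"
    using s eqs(1-5) by (simp_all add: d_def exp_diff_def)
  have AB: "d (A i) \<le> int (lookup u (A i))" "d (A i) \<le> int (lookup v (B i))" if "i \<in> {1..t}" for i
    using eqs(6)[OF that] by (simp_all add: d_def exp_diff_def)
  obtain i where i: "i \<in> {1..t}" "0 < d (A i)"
    using sum_pos_imp_ex_pos[of "\<lambda>i. d (A i)" "{1..t}"] eqs(7) s by auto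
  show ?thesis
  proof (cases "2 \<le> d (A i)")
    case True
    then have "mdvd (G23_lhs i i) u" "mdvd (G23_rhs i i) v"
      using AB[OF i(1)] edges by (auto intro!: mdvd_G23_lhs mdvd_G23_rhs)
    then show ?thesis
      using i(1) by blast
  next
    case False
    then have "0 < (\<Sum>j\<in>{1..t} - {i}. d (A j))"
      using eqs(7) s i by (simp add: sum.remove)
    then obtain j where j: "j \<in> {1..t}" "j \<noteq> i" "0 < d (A j)"
      using sum_pos_imp_ex_pos by fastforce
    then have "mdvd (G23_lhs i j) u" "mdvd (G23_rhs i j) v"
      using AB[OF i(1)] AB[OF j(1)] i(2) edges by (auto intro!: mdvd_G23_lhs mdvd_G23_rhs)
    then show ?thesis
      using i(1) j(1) by blast
  qed
qed

lemma sum_eq_0_obtains_pos_neg: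
  assumes "finite S" "sum f S = 0" "x \<in> S" "f x \<noteq> (0 :: 'a::linordered_ab_group_add)"
  obtains p q where "p \<in> S" "q \<in> S" "0 < f p" "f q < 0"
proof -
  have rest: "sum f (S - {x}) = - f x"
    using assms(1-3) by (simp add: sum.remove eq_neg_iff_add_eq_0 add.commute)
  show ?thesis
  proof (cases "0 < f x")
    case True
    then have "sum f (S - {x}) < 0"
      using rest by simp
    then obtain q where "q \<in> S - {x}" "f q < 0"
      using sum_neg_imp_ex_neg by blast
    then show ?thesis
      using that[of x q] assms(3) True by blast
  next
    case False
    then have "0 < sum f (S - {x})"
      using rest assms(4) by simp
    then obtain p where "p \<in> S - {x}" "0 < f p"
      using sum_pos_imp_ex_pos by blast
    then show ?thesis
      using that[of p x] assms(3,4) False by simp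
  qed
qed

lemma same_fibre_balanced_A_diff:
  assumes "same_fibre t u v" "exp_diff u v (E 2) = 0" "u \<noteq> v"
  obtains i where "i \<in> {1..t}" "exp_diff u v (A i) \<noteq> 0"
proof -
  have "\<exists>i\<in>{1..t}. exp_diff u v (A i) \<noteq> 0"
  proof (rule ccontr)
    assume A: "\<not> ?thesis"
    have "exp_diff u v e = 0" if "e \<in> Et t" for e
      using that A assms(2) same_fibre_exp_diff[OF assms(1)] unfolding Et_eq by auto
    moreover have "exp_diff u v e = 0" if "e \<notin> Et t" for e
    proof -
      have "e \<notin> keys u" "e \<notin> keys v"
        using that assms(1) by (auto simp: same_fibre_def)
      then show ?thesis
        by (simp add: exp_diff_def in_keys_iff)
    qed
    ultimately have "u = v"
      by (intro poly_mapping_eqI) (metis exp_diff_def eq_iff_diff_eq_0 of_nat_eq_iff)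
    then show False
      using assms(3) by simp
  qed
  then show ?thesis
    using that by blast
qed

lemma G1_divides_if_E2_balanced:
  assumes "same_fibre t u v" "exp_diff u v (E 2) = 0" "u \<noteq> v"
  shows "\<exists>i\<in>{1..t}. \<exists>j\<in>{1..t}. i \<noteq> j \<and> mdvd (G1_mono i j) u \<and> mdvd (G1_mono j i) v"
proof -
  define d where "d = exp_diff u v"
  note eqs = same_fibre_exp_diff[OF assms(1), folded d_def]
  obtain i0 where "i0 \<in> {1..t}" "d (A i0) \<noteq> 0"
    using same_fibre_balanced_A_diff[OF assms] unfolding d_def by blast
  moreover have "(\<Sum>i=1..t. d (A i)) = 0"
    using eqs(7) assms(2) by (simp add: d_def)
  ultimately obtain p q where pq: "p \<in> {1..t}" "q \<in> {1..t}" "0 < d (A p)" "d (A q) < 0"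
    by (elim sum_eq_0_obtains_pos_neg[rotated]) auto
  have "1 \<le> lookup u (A p)" "1 \<le> lookup v (B p)" "1 \<le> lookup v (A q)" "1 \<le> lookup u (B q)"
    using pq eqs(6)[OF pq(1)] eqs(6)[OF pq(2)] by (simp_all add: d_def exp_diff_def)
  then have "mdvd (G1_mono p q) u" "mdvd (G1_mono q p) v"
    by (simp_all add: mdvd_G1_mono)
  moreover have "p \<noteq> q"
    using pq by auto
  ultimately show ?thesis
    using pq(1,2) by blast
qed

lemma Gpairs_divides_fibre_pairs: "divides_fibre_pairs t (Gpairs t)"
proof -
  have oriented: "\<exists>(h, k) \<in> Gpairs t \<union> (Gpairs t)\<inverse>. mdvd h u \<and> mdvd k v"
    if uv: "same_fibre t u v" "u \<noteq> v" and s: "0 \<le> exp_diff u v (E 2)" for u v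
  proof (cases "exp_diff u v (E 2) = 0")
    case True
    then obtain i j where "i \<in> {1..t}" "j \<in> {1..t}" "i \<noteq> j"
        "mdvd (G1_mono i j) u" "mdvd (G1_mono j i) v"
      using G1_divides_if_E2_balanced uv by blast
    then show ?thesis
      using G1_pair_mem by blast
  next
    case False
    then obtain i j where "i \<in> {1..t}" "j \<in> {1..t}" "mdvd (G23_lhs i j) u" "mdvd (G23_rhs i j) v"
      using G23_divides_if_E2_surplus uv s by fastforce
    then show ?thesis
      using G23_pair_mem by blast
  qed
  show ?thesis
    unfolding divides_fibre_pairs_def
  proof (intro allI impI, elim conjE)
    fix u v
    assume uv: "same_fibre t u v" "u \<noteq> v"
    show "\<exists>(h, k) \<in> Gpairs t \<union> (Gpairs t)\<inverse>. mdvd h u \<and> mdvd k v"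
    proof (cases "0 \<le> exp_diff u v (E 2)")
      case True
      then show ?thesis
        using oriented uv by blast
    next
      case False
      then have "0 \<le> exp_diff v u (E 2)"
        by (simp add: exp_diff_def)
      then obtain h k where "(h, k) \<in> Gpairs t \<union> (Gpairs t)\<inverse>" "mdvd h v" "mdvd k u"
        using oriented[of v u] uv same_fibre_sym by blast
      then show ?thesis
        by blast
    qed
  qed
qed

lemma Gpairs_sym_cases:
  assumes "(h, k) \<in> Gpairs t \<union> (Gpairs t)\<inverse>"
  shows "(\<exists>p q. h = G1_mono p q \<and> k = G1_mono q p) \<or> (\<exists>p q. h = G23_lhs p q \<and> k = G23_rhs p q)
      \<or> (\<exists>p q. h = G23_rhs p q \<and> k = G23_lhs p q)"
  using assms Gpairs_cases[of h k t] Gpairs_cases[of k h t] by blast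

lemma mdeg_G_monos [simp]:
  "mdeg (G1_mono i j) = 2" "mdeg (G23_lhs i j) = 5" "mdeg (G23_rhs i j) = 5"
  by (simp_all add: G1_mono_def G23_lhs_def G23_rhs_def mdeg_add)

text \<open>No element of \<open>\<G>\<close> divides another one: \<open>\<G>\<^sub>1\<close> and \<open>\<G>\<^sub>2 \<union> \<G>\<^sub>3\<close> are separated by degree
  and by the variables \<open>b\<^sub>q\<close> and \<open>f\<^sub>2\<close>.\<close>

lemma G1_pair_minimal:
  assumes "(h, k) \<in> Gpairs t \<union> (Gpairs t)\<inverse>" "mdvd h (G1_mono i j)" "mdvd k (G1_mono j i)"
  shows "h = G1_mono i j \<and> k = G1_mono j i"
  using Gpairs_sym_cases[OF assms(1)] mdvd_mdeg_le[OF assms(2)]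
  by (elim disjE exE conjE) (use assms(2,3) in \<open>simp_all add: mdvd_mdeg_eq\<close>)

lemma G23_pair_minimal:
  assumes "(h, k) \<in> Gpairs t \<union> (Gpairs t)\<inverse>" "mdvd h (G23_lhs i j)" "mdvd k (G23_rhs i j)"
  shows "h = G23_lhs i j \<and> k = G23_rhs i j"
  using Gpairs_sym_cases[OF assms(1)]
proof (elim disjE exE conjE)
  fix p q
  assume "h = G1_mono p q"
  then show ?thesis
    using assms(2) by (auto simp: mdvd_def G1_mono_def G23_lhs_def Poly_Mapping.lookup_add lookup_mv
        dest: spec[of _ "B q"])
next
  fix p q
  assume "h = G23_lhs p q" "k = G23_rhs p q"
  then show ?thesis
    using assms(2,3) by (simp add: mdvd_mdeg_eq)
next
  fix p q
  assume "h = G23_rhs p q"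
  then show ?thesis
    using assms(2) by (auto simp: mdvd_def G23_rhs_def G23_lhs_def Poly_Mapping.lookup_add lookup_mv
        dest: spec[of _ "F 2"])
qed

lemma Gpairs_minimal:
  assumes "(u1, u2) \<in> Gpairs t" "(h, k) \<in> Gpairs t \<union> (Gpairs t)\<inverse>" "mdvd h u1" "mdvd k u2"
  shows "h = u1 \<and> k = u2"
  using Gpairs_cases[OF assms(1)] G1_pair_minimal[OF assms(2)] G23_pair_minimal[OF assms(2)] assms(3,4)
  by blast

theorem theorem3p3:
  fixes t :: nat
  assumes "t \<ge> 2"
    and alg_closed: "\<forall>p :: 'k :: field_char_0 poly. degree p \<ge> 1 \<longrightarrow> (\<exists>x. poly p x = 0)"
  shows "(\<forall>(u1, u2) \<in> Gpairs t. primitive t u1 u2 TYPE('k))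
     \<and> toric_ideal t = ideal_gen (PR t) (Gset t :: 'k epoly set)
     \<and> universal_groebner_basis (Gset t :: 'k epoly set) (toric_ideal t)"
proof -
  have Gset: "Gset t = (binoms (Gpairs t) :: 'k epoly set)"
    by (simp add: Gset_def binoms_def)
  have moves: "Gpairs t \<subseteq> moves t" and divides: "divides_fibre_pairs t (Gpairs t)"
    by (rule Gpairs_subset_moves Gpairs_divides_fibre_pairs)+
  have "primitive t u1 u2 TYPE('k)" if "(u1, u2) \<in> Gpairs t" for u1 u2
    using moves divides that Gpairs_minimal[OF that] by (rule primitive_if_minimal)
  moreover have "toric_ideal t = ideal_gen (PR t) (Gset t :: 'k epoly set)"
    unfolding Gset using moves divides by (rule toric_ideal_eq_ideal_gen_binoms)
  moreover have "universal_groebner_basis (Gset t :: 'k epoly set) (toric_ideal t)"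
    unfolding Gset universal_groebner_basis_def using groebner_basis_binoms moves divides by blast
  ultimately show ?thesis
    by blast
qed

end
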